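(* Let $k\in\mathbb C\setminus\mathbb Q$, $n,m\in\mathbb Z_{>0}$, with $\mathcal E$-equivalence taken at $p_0=n+k^{-1}m$. Let $E\subset\mathcal P_{n,m}$ be an $\mathcal E$-equivalence class, let $x\in\pi(n,m)$, and suppose there is $\alpha\in E$ with $S_x(\alpha)\neq\emptyset$. Then there exists a unique $\mathcal E$-equivalence class $E_x$, different from $E$, such that $X(\alpha)\cap E_x=S_x(\alpha)$ for every $\alpha\in E$.
   Context: Partitions are Young diagrams (finite sets of boxes $(i,j)\in\mathbb Z^2_{>0}$, $i$ = row, $j$ = column, closed under moving up or left); a bipartition is a pair of partitions, operations componentwise. For a box $x=(i,j)$, $c(x,a)=(j-1)+k(i-1)+a$; for $\alpha=(\lambda,\mu)$, $b_r(\alpha,k,p_0)=\sum_{x\in\lambda}c(x,0)^{r-1}+(-1)^r\sum_{y\in\mu}c(y,1+k-kp_0)^{r-1}$; bipartitions are $\mathcal E$-equivalent if all $b_r$, $r\ge1$, coincide. $\pi(n,m)=\{(i,j):1\le i\le n,1\le j\le m\}$, $\theta(i,j)=(n-i+1,m-j+1)$, $\mathcal P_{n,m}$ = bipartitions $(\lambda,\mu)$ with $\lambda,\mu\subset\pi(n,m)$. For $\alpha=(\lambda,\mu)\in\mathcal P_{n,m}$ and $x\in\pi(n,m)$, $S_x(\alpha)$ is the set consisting of $(\lambda\cup x,\mu)$, included only if $x\notin\lambda$ and $\lambda\cup x$ is a Young diagram, and of $(\lambda,\mu\setminus\theta(x))$, included only if $\theta(x)\in\mu$ and $\mu\setminus\theta(x)$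 is a Young diagram. $X(\alpha)$ is the set of all bipartitions $\beta=(\tilde\lambda,\tilde\mu)$ such that $\alpha$ is obtained from $\beta$ either by deleting one box from $\tilde\lambda$ or by adding one box to $\tilde\mu$. *)

theory Defs
  imports Complex_Main
begin

type_synonym box = "nat \<times> nat"   (* (i, j): i = row, j = column, both \<ge> 1 *)
type_synonym bipart = "box set \<times> box set"

definition young :: "box set \<Rightarrow> bool" where
  "young lam \<longleftrightarrow> finite lam \<and> (\<forall>(i,j)\<in>lam. 1 \<le> i \<and> 1 \<le> j) \<and>
     (\<forall>i j i' j'. (i,j) \<in> lam \<and> 1 \<le> i' \<and> i' \<le> i \<and> 1 \<le> j' \<and> j' \<le> j \<longrightarrow> (i',j') \<in> lam)"

definition bipartition :: "bipart \<Rightarrow> bool" where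
  "bipartition \<alpha> \<longleftrightarrow> young (fst \<alpha>) \<and> young (snd \<alpha>)"

definition cc :: "complex \<Rightarrow> box \<Rightarrow> complex \<Rightarrow> complex" where
  "cc k x a = of_nat (snd x - 1) + k * of_nat (fst x - 1) + a"

definition bb :: "nat \<Rightarrow> bipart \<Rightarrow> complex \<Rightarrow> complex \<Rightarrow> complex" where
  "bb r \<alpha> k p0 = (\<Sum>x\<in>fst \<alpha>. cc k x 0 ^ (r - 1))
      + (-1) ^ r * (\<Sum>y\<in>snd \<alpha>. cc k y (1 + k - k * p0) ^ (r - 1))"

definition Eequiv :: "complex \<Rightarrow> complex \<Rightarrow> bipart \<Rightarrow> bipart \<Rightarrow> bool" where
  "Eequiv k p0 \<alpha> \<beta> \<longleftrightarrow> (\<forall>r\<ge>1. bb r \<alpha> k p0 = bb r \<beta> k p0)"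

definition rect :: "nat \<Rightarrow> nat \<Rightarrow> box set" where
  "rect n m = {(i,j). 1 \<le> i \<and> i \<le> n \<and> 1 \<le> j \<and> j \<le> m}"

definition theta :: "nat \<Rightarrow> nat \<Rightarrow> box \<Rightarrow> box" where
  "theta n m x = (n - fst x + 1, m - snd x + 1)"

definition Pnm :: "nat \<Rightarrow> nat \<Rightarrow> bipart set" where
  "Pnm n m = {\<alpha>. bipartition \<alpha> \<and> fst \<alpha> \<subseteq> rect n m \<and> snd \<alpha> \<subseteq> rect n m}"

definition Eclasses :: "complex \<Rightarrow> complex \<Rightarrow> nat \<Rightarrow> nat \<Rightarrow> bipart set set" where
  "Eclasses k p0 n m = {{\<beta> \<in> Pnm n m. Eequiv k p0 \<alpha> \<beta>} | \<alpha>. \<alpha> \<in> Pnm n m}"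

definition Sx :: "nat \<Rightarrow> nat \<Rightarrow> box \<Rightarrow> bipart \<Rightarrow> bipart set" where
  "Sx n m x \<alpha> =
     {(fst \<alpha> \<union> {x}, snd \<alpha>) | _::unit. x \<notin> fst \<alpha> \<and> young (fst \<alpha> \<union> {x})}
   \<union> {(fst \<alpha>, snd \<alpha> - {theta n m x}) | _::unit.
        theta n m x \<in> snd \<alpha> \<and> young (snd \<alpha> - {theta n m x})}"

definition Xset :: "bipart \<Rightarrow> bipart set" where
  "Xset \<alpha> = {\<beta>. bipartition \<beta> \<and>
     ((\<exists>b\<in>fst \<beta>. fst \<alpha> = fst \<beta> - {b} \<and> snd \<alpha> = snd \<beta>) \<or>
      (\<exists>b. b \<notin> snd \<beta> \<and> snd \<alpha> = snd \<beta> \<union> {b} \<and> fst \<alpha> = fst \<beta>))}"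

end

theory Submission
  imports Defs
begin

text \<open>At \<open>p\<^sub>0 = n + m/k\<close> the shifted content of a box \<open>y\<close> of the rectangle is minus the content
  of its reflection \<open>\<theta>(y)\<close>, so removing \<open>\<theta>(x)\<close> from \<open>\<mu>\<close> changes every \<open>b\<^sub>r\<close> exactly as adding \<open>x\<close>
  to \<open>\<lambda>\<close> does, namely by \<open>c(x,0)\<^sup>r\<^sup>-\<^sup>1\<close>. Hence all of \<open>S\<^sub>x(\<alpha>)\<close>, \<open>\<alpha> \<in> E\<close>, lies in one class \<open>E\<^sub>x\<close>.
  Conversely a neighbour \<open>\<beta> \<in> X(\<alpha>)\<close> differs from \<open>\<alpha>\<close> by one box, which changes \<open>b\<^sub>2\<close> by that box's
  content (or its reflection's); since \<open>k \<notin> \<rat>\<close>, content is injective on the rectangle, so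
  \<open>\<beta> \<in> E\<^sub>x\<close> forces the box to be \<open>x\<close> (or \<open>\<theta>(x)\<close>), i.e. \<open>\<beta> \<in> S\<^sub>x(\<alpha>)\<close>.\<close>

abbreviation p0_rect :: "nat \<Rightarrow> nat \<Rightarrow> complex \<Rightarrow> complex" where
  "p0_rect n m k \<equiv> of_nat n + of_nat m / k"

definition content_shift_class :: "complex \<Rightarrow> nat \<Rightarrow> nat \<Rightarrow> bipart \<Rightarrow> box \<Rightarrow> bipart set" where
  "content_shift_class k n m \<alpha> x =
     {\<beta> \<in> Pnm n m. \<forall>r\<ge>1. bb r \<beta> k (p0_rect n m k) = bb r \<alpha> k (p0_rect n m k) + cc k x 0 ^ (r - 1)}"

lemma young_finite: "young A \<Longrightarrow> finite A"
  unfolding young_def by auto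

lemma Pnm_D:
  assumes "\<alpha> \<in> Pnm n m"
  shows "young (fst \<alpha>)" "young (snd \<alpha>)" "fst \<alpha> \<subseteq> rect n m" "snd \<alpha> \<subseteq> rect n m"
  using assms unfolding Pnm_def bipartition_def by auto

lemma theta_in_rect: "y \<in> rect n m \<Longrightarrow> theta n m y \<in> rect n m"
  unfolding rect_def theta_def by auto

lemma theta_theta: "y \<in> rect n m \<Longrightarrow> theta n m (theta n m y) = y"
  unfolding rect_def theta_def by auto

lemma inj_on_content_rect:
  assumes "k \<notin> \<rat>"
  shows "inj_on (\<lambda>y. cc k y 0) (rect n m)"
proof
  fix x y assume "x \<in> rect n m" "y \<in> rect n m" and eq: "cc k x 0 = cc k y 0"
  then obtain i j i' j' where x: "x = (i, j)" "1 \<le> i" "1 \<le> j"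
    and y: "y = (i', j')" "1 \<le> i'" "1 \<le> j'"
    unfolding rect_def by auto
  have lin: "of_int (int j - int j') = k * of_int (int i' - int i)"
    using eq x y unfolding cc_def by (simp add: of_nat_diff algebra_simps)
  have "i = i'"
  proof (rule ccontr)
    assume "i \<noteq> i'"
    then have "k = of_int (int j - int j') / of_int (int i' - int i)"
      using lin by (simp add: field_simps)
    then show False using assms by simp
  qed
  with lin have "j = j'" by simp
  with x y \<open>i = i'\<close> show "x = y" by simp
qed

lemma bb_add_fst:
  assumes "x \<notin> fst \<alpha>" "finite (fst \<alpha>)"
  shows "bb r (fst \<alpha> \<union> {x}, snd \<alpha>) k p0 = bb r \<alpha> k p0 + cc k x 0 ^ (r - 1)"
  using assms unfolding bb_def by (simp add: algebra_simps)

lemma shifted_content_rect: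
  assumes "y \<in> rect n m" "k \<noteq> 0"
  shows "cc k y (1 + k - k * p0_rect n m k) = - cc k (theta n m y) 0"
proof -
  have "k * p0_rect n m k = k * of_nat n + of_nat m"
    using assms(2) by (simp add: field_simps)
  then show ?thesis
    using assms(1) unfolding rect_def cc_def theta_def by (auto simp: of_nat_diff algebra_simps)
qed

lemma neg_one_power_mult_neg_power:
  assumes "r \<ge> 1"
  shows "(-1) ^ r * (- c) ^ (r - 1) = - ((c::'a::comm_ring_1) ^ (r - 1))"
proof -
  obtain s where r: "r = Suc s" using assms by (cases r) auto
  have "(-1) ^ s * (- c) ^ s = ((-1) * (- c)) ^ s"
    by (rule power_mult_distrib[symmetric])
  then show ?thesis unfolding r by simp
qed

lemma bb_remove_snd:
  assumes "y \<in> snd \<alpha>" "finite (snd \<alpha>)" "y \<in> rect n m" "k \<noteq> 0" "r \<ge> 1"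
  shows "bb r (fst \<alpha>, snd \<alpha> - {y}) k (p0_rect n m k)
       = bb r \<alpha> k (p0_rect n m k) + cc k (theta n m y) 0 ^ (r - 1)"
proof -
  let ?a = "1 + k - k * p0_rect n m k"
  have "(\<Sum>z\<in>snd \<alpha>. cc k z ?a ^ (r - 1)) = cc k y ?a ^ (r - 1) + (\<Sum>z\<in>snd \<alpha> - {y}. cc k z ?a ^ (r - 1))"
    using assms(1,2) by (simp add: sum.remove)
  moreover have "(-1) ^ r * cc k y ?a ^ (r - 1) = - (cc k (theta n m y) 0 ^ (r - 1))"
    using shifted_content_rect[OF assms(3,4)] neg_one_power_mult_neg_power[OF assms(5)] by simp
  ultimately show ?thesis
    unfolding bb_def by (simp add: algebra_simps)
qed

lemma Sx_cases:
  assumes "\<gamma> \<in> Sx n m x \<alpha>"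
  obtains "\<gamma> = (fst \<alpha> \<union> {x}, snd \<alpha>)" "x \<notin> fst \<alpha>" "young (fst \<alpha> \<union> {x})"
  | "\<gamma> = (fst \<alpha>, snd \<alpha> - {theta n m x})" "theta n m x \<in> snd \<alpha>" "young (snd \<alpha> - {theta n m x})"
  using assms unfolding Sx_def by blast

lemma Sx_addI: "x \<notin> fst \<alpha> \<Longrightarrow> young (fst \<alpha> \<union> {x}) \<Longrightarrow> (fst \<alpha> \<union> {x}, snd \<alpha>) \<in> Sx n m x \<alpha>"
  unfolding Sx_def by blast

lemma Sx_removeI:
  "theta n m x \<in> snd \<alpha> \<Longrightarrow> young (snd \<alpha> - {theta n m x}) \<Longrightarrow>
   (fst \<alpha>, snd \<alpha> - {theta n m x}) \<in> Sx n m x \<alpha>"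
  unfolding Sx_def by blast

lemma Sx_subset_content_shift_class:
  assumes "\<alpha> \<in> Pnm n m" "x \<in> rect n m" "k \<noteq> 0"
  shows "Sx n m x \<alpha> \<subseteq> content_shift_class k n m \<alpha> x"
proof
  fix \<gamma> assume "\<gamma> \<in> Sx n m x \<alpha>"
  then show "\<gamma> \<in> content_shift_class k n m \<alpha> x"
  proof (cases rule: Sx_cases)
    case 1
    then show ?thesis
      using Pnm_D[OF assms(1)] assms(2) bb_add_fst[of x \<alpha>] young_finite
      unfolding content_shift_class_def Pnm_def bipartition_def by auto
  next
    case 2
    then show ?thesis
      using Pnm_D[OF assms(1)] assms bb_remove_snd[of "theta n m x" \<alpha> n m k] young_finite
        theta_theta[OF assms(2)]
      unfolding content_shift_class_def Pnm_def bipartition_def by auto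
  qed
qed

lemma Sx_subset_Xset:
  assumes "\<alpha> \<in> Pnm n m"
  shows "Sx n m x \<alpha> \<subseteq> Xset \<alpha>"
proof
  fix \<gamma> assume "\<gamma> \<in> Sx n m x \<alpha>"
  then show "\<gamma> \<in> Xset \<alpha>"
  proof (cases rule: Sx_cases)
    case 1
    then show ?thesis using Pnm_D[OF assms] unfolding Xset_def bipartition_def by auto
  next
    case 2
    then show ?thesis
      using Pnm_D[OF assms] unfolding Xset_def bipartition_def
      by (intro CollectI conjI disjI2 exI[of _ "theta n m x"]) auto
  qed
qed

lemma Xset_content_shift_imp_Sx:
  assumes "k \<notin> \<rat>" "x \<in> rect n m" "\<alpha> \<in> Pnm n m" "\<beta> \<in> Pnm n m" "\<beta> \<in> Xset \<alpha>"
    and b2: "bb 2 \<beta> k (p0_rect n m k) = bb 2 \<alpha> k (p0_rect n m k) + cc k x 0"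
  shows "\<beta> \<in> Sx n m x \<alpha>"
proof -
  have k0: "k \<noteq> 0" using assms(1) by auto
  note content_inj = inj_onD[OF inj_on_content_rect[OF assms(1)]]
  from assms(5) consider
      (add) c where "c \<in> fst \<beta>" "fst \<alpha> = fst \<beta> - {c}" "snd \<alpha> = snd \<beta>"
    | (remove) c where "c \<notin> snd \<beta>" "snd \<alpha> = snd \<beta> \<union> {c}" "fst \<alpha> = fst \<beta>"
    unfolding Xset_def by blast
  then show ?thesis
  proof cases
    case add
    then have \<beta>: "\<beta> = (fst \<alpha> \<union> {c}, snd \<alpha>)" "c \<notin> fst \<alpha>"
      by (auto simp: prod_eq_iff)
    then have "cc k c 0 = cc k x 0"
      using b2 bb_add_fst[of c \<alpha> 2] young_finite[OF Pnm_D(1)[OF assms(3)]] by simp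
    moreover have "c \<in> rect n m" using add Pnm_D(3)[OF assms(4)] by auto
    ultimately have "c = x" using content_inj assms(2) by blast
    then show ?thesis
      using \<beta> Sx_addI Pnm_D(1)[OF assms(4)] by simp
  next
    case remove
    then have \<beta>: "\<beta> = (fst \<alpha>, snd \<alpha> - {c})" and c: "c \<in> snd \<alpha>"
      by (auto simp: prod_eq_iff)
    have c_rect: "c \<in> rect n m" using c Pnm_D(4)[OF assms(3)] by auto
    have "cc k (theta n m c) 0 = cc k x 0"
      using b2 \<beta> bb_remove_snd[OF c young_finite[OF Pnm_D(2)[OF assms(3)]] c_rect k0, of 2] by simp
    then have "theta n m c = x" using content_inj theta_in_rect[OF c_rect] assms(2) by blast
    then have "c = theta n m x" using theta_theta[OF c_rect] by auto
    then show ?thesis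
      using \<beta> c Sx_removeI Pnm_D(2)[OF assms(4)] by simp
  qed
qed

lemma Xset_inter_content_shift_class:
  assumes "k \<notin> \<rat>" "x \<in> rect n m" "\<alpha> \<in> Pnm n m"
  shows "Xset \<alpha> \<inter> content_shift_class k n m \<alpha> x = Sx n m x \<alpha>"
proof
  have "k \<noteq> 0" using assms(1) by auto
  then show "Sx n m x \<alpha> \<subseteq> Xset \<alpha> \<inter> content_shift_class k n m \<alpha> x"
    using Sx_subset_Xset Sx_subset_content_shift_class assms by blast
  show "Xset \<alpha> \<inter> content_shift_class k n m \<alpha> x \<subseteq> Sx n m x \<alpha>"
    using Xset_content_shift_imp_Sx[OF assms] unfolding content_shift_class_def by fastforce
qed

lemma Eclass_eq:
  assumes "E \<in> Eclasses k p0 n m" "\<alpha> \<in> E"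
  shows "E = {\<beta> \<in> Pnm n m. Eequiv k p0 \<alpha> \<beta>}"
  using assms unfolding Eclasses_def Eequiv_def by auto

lemma Eclass_in_Eclasses: "\<gamma> \<in> Pnm n m \<Longrightarrow> {\<beta> \<in> Pnm n m. Eequiv k p0 \<gamma> \<beta>} \<in> Eclasses k p0 n m"
  unfolding Eclasses_def by blast

lemma Eclass_of_shifted:
  assumes "\<gamma> \<in> content_shift_class k n m \<alpha> x" "Eequiv k (p0_rect n m k) \<alpha> \<alpha>'"
  shows "{\<beta> \<in> Pnm n m. Eequiv k (p0_rect n m k) \<gamma> \<beta>} = content_shift_class k n m \<alpha>' x"
  using assms unfolding content_shift_class_def Eequiv_def by auto

lemma not_Eequiv_shifted:
  assumes "\<gamma> \<in> content_shift_class k n m \<alpha> x"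
  shows "\<not> Eequiv k (p0_rect n m k) \<alpha> \<gamma>"
proof
  assume "Eequiv k (p0_rect n m k) \<alpha> \<gamma>"
  then have "bb 1 \<gamma> k (p0_rect n m k) = bb 1 \<alpha> k (p0_rect n m k)"
    unfolding Eequiv_def by simp
  with assms show False
    unfolding content_shift_class_def by simp
qed

theorem mainTheorem5:
  fixes k :: complex and n m :: nat and E :: "bipart set" and x :: box
  assumes "k \<notin> \<rat>" and "n > 0" and "m > 0"
    and "E \<in> Eclasses k (of_nat n + of_nat m / k) n m"
    and "x \<in> rect n m"
    and "\<exists>\<alpha>\<in>E. Sx n m x \<alpha> \<noteq> {}"
  shows "\<exists>!F. F \<in> Eclasses k (of_nat n + of_nat m / k) n m \<and> F \<noteq> E \<and>
               (\<forall>\<alpha>\<in>E. Xset \<alpha> \<inter> F = Sx n m x \<alpha>)"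
proof -
  let ?p0 = "p0_rect n m k"
  obtain \<alpha>\<^sub>0 \<gamma> where \<alpha>\<^sub>0: "\<alpha>\<^sub>0 \<in> E" and \<gamma>: "\<gamma> \<in> Sx n m x \<alpha>\<^sub>0" using assms(6) by blast
  have E: "E = {\<beta> \<in> Pnm n m. Eequiv k ?p0 \<alpha>\<^sub>0 \<beta>}" using Eclass_eq[OF assms(4) \<alpha>\<^sub>0] .
  have E_Pnm: "\<alpha> \<in> Pnm n m" if "\<alpha> \<in> E" for \<alpha> using that E by simp
  have "k \<noteq> 0" using assms(1) by auto
  then have \<gamma>_shift: "\<gamma> \<in> content_shift_class k n m \<alpha>\<^sub>0 x"
    using subsetD[OF Sx_subset_content_shift_class[OF E_Pnm[OF \<alpha>\<^sub>0] assms(5)] \<gamma>] by simp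
  define F where "F = {\<beta> \<in> Pnm n m. Eequiv k ?p0 \<gamma> \<beta>}"
  have F_shift: "F = content_shift_class k n m \<alpha> x" if "\<alpha> \<in> E" for \<alpha>
    unfolding F_def by (rule Eclass_of_shifted[OF \<gamma>_shift]) (use that E in simp)
  have "F \<in> Eclasses k ?p0 n m"
    unfolding F_def by (rule Eclass_in_Eclasses) (use \<gamma>_shift content_shift_class_def in simp)
  moreover have "F \<noteq> E"
  proof -
    have "\<gamma> \<in> F" using \<gamma>_shift F_shift[OF \<alpha>\<^sub>0] by simp
    moreover have "\<gamma> \<notin> E" using not_Eequiv_shifted[OF \<gamma>_shift] E by simp
    ultimately show ?thesis by blast
  qed
  moreover have "\<forall>\<alpha>\<in>E. Xset \<alpha> \<inter> F = Sx n m x \<alpha>"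
    using Xset_inter_content_shift_class[OF assms(1,5) E_Pnm] F_shift by simp
  moreover have "F' = F" if "F' \<in> Eclasses k ?p0 n m" "\<forall>\<alpha>\<in>E. Xset \<alpha> \<inter> F' = Sx n m x \<alpha>" for F'
  proof -
    have "\<gamma> \<in> F'" using that(2) \<alpha>\<^sub>0 \<gamma> by blast
    then show ?thesis using Eclass_eq[OF that(1)] unfolding F_def by simp
  qed
  ultimately show ?thesis by - (rule ex1I[of _ F], blast+)
qed

end
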